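(* Let $F$ be a forest on $n\ge 2$ vertices and let $v\in V(F)$. Then $$\frac{\xi(F)}{\xi(F-v)}\le \begin{cases} 2^{\frac{n-3}{2}}+1 & \text{if } n \text{ is odd},\\ 2^{\frac{n-2}{2}}+1 & \text{if } n \text{ is even}.\end{cases}$$
   Context: For a graph $H$, $\xi(H)$ denotes the number of maximum independent sets of $H$ (independent sets of size equal to the independence number $\alpha(H)$); for the graph with no vertices, $\xi=1$. $F-v$ is the graph obtained from $F$ by deleting $v$ and its incident edges. *)

theory Defs
  imports Complex_Main
begin

definition simple_graph :: "'a set \<Rightarrow> ('a \<Rightarrow> 'a \<Rightarrow> bool) \<Rightarrow> bool" where
  "simple_graph V E \<longleftrightarrow> finite V \<and> (\<forall>x y. E x y \<longrightarrow> E y x) \<and> (\<forall>x. \<not> E x x)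
     \<and> (\<forall>x y. E x y \<longrightarrow> x \<in> V \<and> y \<in> V)"

definition has_cycle :: "'a set \<Rightarrow> ('a \<Rightarrow> 'a \<Rightarrow> bool) \<Rightarrow> bool" where
  "has_cycle V E \<longleftrightarrow> (\<exists>xs. length xs \<ge> 3 \<and> distinct xs \<and> set xs \<subseteq> V
     \<and> (\<forall>i. Suc i < length xs \<longrightarrow> E (xs ! i) (xs ! Suc i)) \<and> E (last xs) (hd xs))"

definition forest :: "'a set \<Rightarrow> ('a \<Rightarrow> 'a \<Rightarrow> bool) \<Rightarrow> bool" where
  "forest V E \<longleftrightarrow> simple_graph V E \<and> \<not> has_cycle V E"

definition indep_set :: "'a set \<Rightarrow> ('a \<Rightarrow> 'a \<Rightarrow> bool) \<Rightarrow> 'a set \<Rightarrow> bool" where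
  "indep_set V E S \<longleftrightarrow> S \<subseteq> V \<and> (\<forall>x\<in>S. \<forall>y\<in>S. \<not> E x y)"

definition alpha :: "'a set \<Rightarrow> ('a \<Rightarrow> 'a \<Rightarrow> bool) \<Rightarrow> nat" where
  "alpha V E = Max (card ` {S. indep_set V E S})"

definition xi :: "'a set \<Rightarrow> ('a \<Rightarrow> 'a \<Rightarrow> bool) \<Rightarrow> nat" where
  "xi V E = card {S. indep_set V E S \<and> card S = alpha V E}"

definition del_vertex :: "'a set \<Rightarrow> ('a \<Rightarrow> 'a \<Rightarrow> bool) \<Rightarrow> 'a \<Rightarrow> 'a set \<times> ('a \<Rightarrow> 'a \<Rightarrow> bool)" where
  "del_vertex V E v = (V - {v}, \<lambda>x y. E x y \<and> x \<noteq> v \<and> y \<noteq> v)"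

end

theory Submission imports Defs begin

text \<open>A forest F on n vertices has a vertex u of degree at most one (an end of a longest path).
  Every maximum independent set meets the closed neighbourhood N[u], of one or two vertices, in
  exactly one vertex, and since \<open>\<alpha>(F - N[u]) < \<alpha>(F)\<close> the rest of it is maximum in F - N[u];
  by induction \<open>\<xi>(F) \<le> 2^(n div 2)\<close>.
  For the ratio, the maximum independent sets of F avoiding v are maximum in F - v, and those
  containing v are determined by their trace on F - N[v], so \<open>\<xi>(F) \<le> \<xi>(F - v) + \<xi>(F - N[v])\<close>.
  If v has a neighbour, F - N[v] has at most n - 2 vertices, so the second term is at most
  \<open>2^((n - 2) div 2) \<le> 2^((n - 2) div 2) \<xi>(F - v)\<close>; otherwise F - N[v] = F - v.\<close>

definition edges_outside :: "('a \<Rightarrow> 'a \<Rightarrow> bool) \<Rightarrow> 'a set \<Rightarrow> 'a \<Rightarrow> 'a \<Rightarrow> bool" where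
  "edges_outside E D x y \<longleftrightarrow> E x y \<and> x \<notin> D \<and> y \<notin> D"

definition closed_nbhd :: "('a \<Rightarrow> 'a \<Rightarrow> bool) \<Rightarrow> 'a \<Rightarrow> 'a set" where
  "closed_nbhd E u = insert u {x. E u x}"

definition max_indep_sets :: "'a set \<Rightarrow> ('a \<Rightarrow> 'a \<Rightarrow> bool) \<Rightarrow> 'a set set" where
  "max_indep_sets V E = {S. indep_set V E S \<and> card S = alpha V E}"

lemma del_vertex_eq: "del_vertex V E v = (V - {v}, edges_outside E {v})"
  by (auto simp: del_vertex_def edges_outside_def fun_eq_iff)

lemma xi_eq_card_max_indep_sets: "xi V E = card (max_indep_sets V E)"
  by (simp add: xi_def max_indep_sets_def)

lemma finite_indep_sets: "finite V \<Longrightarrow> finite {S. indep_set V E S}"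
  by (rule finite_subset[of _ "Pow V"]) (auto simp: indep_set_def)

lemma finite_max_indep_sets: "finite V \<Longrightarrow> finite (max_indep_sets V E)"
  unfolding max_indep_sets_def by (rule finite_subset[OF _ finite_indep_sets]) auto

lemma finite_indep_set: "finite V \<Longrightarrow> indep_set V E S \<Longrightarrow> finite S"
  by (auto simp: indep_set_def intro: finite_subset)

lemma card_le_alpha: "finite V \<Longrightarrow> indep_set V E S \<Longrightarrow> card S \<le> alpha V E"
  unfolding alpha_def by (rule Max_ge) (auto intro: finite_indep_sets)

lemma max_indep_sets_nonempty: "finite V \<Longrightarrow> max_indep_sets V E \<noteq> {}"
proof -
  assume "finite V"
  moreover have "indep_set V E {}" by (simp add: indep_set_def)
  ultimately have "alpha V E \<in> card ` {S. indep_set V E S}"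
    unfolding alpha_def by (intro Max_in) (auto intro: finite_indep_sets)
  then show ?thesis by (auto simp: max_indep_sets_def)
qed

lemma xi_pos: "finite V \<Longrightarrow> 0 < xi V E"
  by (simp add: xi_eq_card_max_indep_sets card_gt_0_iff finite_max_indep_sets
      max_indep_sets_nonempty)

lemma indep_set_edges_outside_iff:
  "indep_set (V - D) (edges_outside E D) S \<longleftrightarrow> indep_set V E S \<and> S \<inter> D = {}"
  by (auto simp: indep_set_def edges_outside_def)

lemma alpha_edges_outside_le: "finite V \<Longrightarrow> alpha (V - D) (edges_outside E D) \<le> alpha V E"
proof -
  assume fin: "finite V"
  obtain T where "T \<in> max_indep_sets (V - D) (edges_outside E D)"
    using max_indep_sets_nonempty[of "V - D"] fin by blast
  then show ?thesis
    using card_le_alpha[OF fin] by (force simp: max_indep_sets_def indep_set_edges_outside_iff)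
qed

lemma indep_set_insert:
  assumes "simple_graph V E" "indep_set V E S" "u \<in> V" "\<And>x. E u x \<Longrightarrow> x \<notin> S"
  shows "indep_set V E (insert u S)"
  using assms unfolding simple_graph_def indep_set_def by blast

lemma alpha_del_closed_nbhd_less:
  assumes G: "simple_graph V E" and u: "u \<in> V"
  shows "alpha (V - closed_nbhd E u) (edges_outside E (closed_nbhd E u)) < alpha V E"
proof -
  let ?N = "closed_nbhd E u"
  have fin: "finite V" using G by (simp add: simple_graph_def)
  obtain T where T: "T \<in> max_indep_sets (V - ?N) (edges_outside E ?N)"
    using max_indep_sets_nonempty[of "V - ?N"] fin by blast
  then have T': "indep_set V E T" "T \<inter> ?N = {}"
    by (auto simp: max_indep_sets_def indep_set_edges_outside_iff)
  then have "indep_set V E (insert u T)"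
    by (intro indep_set_insert[OF G _ u]) (auto simp: closed_nbhd_def)
  then have "card (insert u T) \<le> alpha V E" using fin card_le_alpha by blast
  moreover have "u \<notin> T" using T' by (auto simp: closed_nbhd_def)
  ultimately show ?thesis
    using T finite_indep_set[OF fin T'(1)] by (simp add: max_indep_sets_def)
qed

lemma max_indep_set_meets_closed_nbhd:
  assumes G: "simple_graph V E" and S: "S \<in> max_indep_sets V E" and u: "u \<in> V"
  shows "S \<inter> closed_nbhd E u \<noteq> {}"
proof
  assume "S \<inter> closed_nbhd E u = {}"
  then have "indep_set V E (insert u S)" "u \<notin> S"
    using S by (auto intro!: indep_set_insert[OF G _ u] simp: closed_nbhd_def max_indep_sets_def)
  moreover have "finite V" using G by (simp add: simple_graph_def)
  ultimately have "card S < alpha V E"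
    using card_le_alpha finite_indep_set S by (fastforce simp: max_indep_sets_def)
  then show False using S by (simp add: max_indep_sets_def)
qed

lemma card_le_card_mult_xi_del:
  assumes fin: "finite V" and P: "P \<subseteq> max_indep_sets V E" and X: "finite X"
    and meets: "\<And>S. S \<in> P \<Longrightarrow> \<exists>x\<in>X. S \<inter> D = {x}"
    and less: "alpha (V - D) (edges_outside E D) < alpha V E"
  shows "card P \<le> card X * xi (V - D) (edges_outside E D)"
proof -
  let ?M = "max_indep_sets (V - D) (edges_outside E D)"
  have "P \<subseteq> (\<lambda>(x, T). insert x T) ` (X \<times> ?M)"
  proof
    fix S assume S: "S \<in> P"
    then obtain x where x: "x \<in> X" "S \<inter> D = {x}" using meets by blast
    have S': "indep_set V E S" "card S = alpha V E" using S P by (auto simp: max_indep_sets_def)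
    have indep: "indep_set (V - D) (edges_outside E D) (S - D)"
      using S'(1) unfolding indep_set_edges_outside_iff by (auto simp: indep_set_def)
    have "S - D = S - {x}" "x \<in> S" using x by blast+
    then have "card (S - D) = card S - 1"
      using finite_indep_set[OF fin S'(1)] by simp
    then have "S - D \<in> ?M"
      using indep card_le_alpha[OF finite_Diff[OF fin] indep] less S'(2) by (simp add: max_indep_sets_def)
    moreover have "S = insert x (S - D)" using x by blast
    ultimately show "S \<in> (\<lambda>(x, T). insert x T) ` (X \<times> ?M)"
      using x by (intro image_eqI[of _ _ "(x, S - D)"]) auto
  qed
  then have "card P \<le> card ((\<lambda>(x, T). insert x T) ` (X \<times> ?M))"
    using X fin by (intro card_mono) (auto intro: finite_max_indep_sets)
  also have "\<dots> \<le> card (X \<times> ?M)"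
    by (rule card_image_le) (simp add: X fin finite_max_indep_sets)
  finally show ?thesis by (simp add: card_cartesian_product xi_eq_card_max_indep_sets)
qed

lemma xi_le_xi_del_vertex_plus_xi_del_closed_nbhd:
  assumes G: "simple_graph V E" and v: "v \<in> V"
  shows "xi V E \<le> xi (V - {v}) (edges_outside E {v})
                  + xi (V - closed_nbhd E v) (edges_outside E (closed_nbhd E v))"
proof -
  have fin: "finite V" using G by (simp add: simple_graph_def)
  let ?A = "{S \<in> max_indep_sets V E. v \<notin> S}" and ?B = "{S \<in> max_indep_sets V E. v \<in> S}"
  have "?A \<subseteq> max_indep_sets (V - {v}) (edges_outside E {v})"
  proof
    fix S assume "S \<in> ?A"
    then have "indep_set (V - {v}) (edges_outside E {v}) S" "card S = alpha V E"
      by (auto simp: max_indep_sets_def indep_set_edges_outside_iff)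
    then show "S \<in> max_indep_sets (V - {v}) (edges_outside E {v})"
      using card_le_alpha[of "V - {v}"] alpha_edges_outside_le[OF fin, of "{v}" E] fin
      by (force simp: max_indep_sets_def)
  qed
  then have "card ?A \<le> xi (V - {v}) (edges_outside E {v})"
    unfolding xi_eq_card_max_indep_sets by (intro card_mono finite_max_indep_sets) (use fin in auto)
  moreover have "card ?B \<le> xi (V - closed_nbhd E v) (edges_outside E (closed_nbhd E v))"
  proof -
    have "\<exists>x\<in>{v}. S \<inter> closed_nbhd E v = {x}" if "S \<in> ?B" for S
      using that by (auto simp: max_indep_sets_def indep_set_def closed_nbhd_def)
    then show ?thesis
      using card_le_card_mult_xi_del[OF fin _ _ _ alpha_del_closed_nbhd_less[OF G v], of ?B "{v}"]
      by auto
  qed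
  moreover have "xi V E = card ?A + card ?B"
  proof -
    have "max_indep_sets V E = ?A \<union> ?B" "?A \<inter> ?B = {}" by blast+
    moreover have "finite ?A" "finite ?B" using finite_max_indep_sets[OF fin] by auto
    ultimately show ?thesis by (metis card_Un_disjoint xi_eq_card_max_indep_sets)
  qed
  ultimately show ?thesis by linarith
qed

lemma has_cycle_mono:
  assumes "has_cycle V' E'" "V' \<subseteq> V" "\<And>x y. E' x y \<Longrightarrow> E x y"
  shows "has_cycle V E"
  using assms unfolding has_cycle_def by blast

lemma forest_edges_outside: "forest V E \<Longrightarrow> forest (V - D) (edges_outside E D)"
  unfolding forest_def
  by (auto simp: simple_graph_def edges_outside_def dest: has_cycle_mono[of "V - D" _ V E])

definition is_path :: "'a set \<Rightarrow> ('a \<Rightarrow> 'a \<Rightarrow> bool) \<Rightarrow> 'a list \<Rightarrow> bool" where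
  "is_path V E xs \<longleftrightarrow> xs \<noteq> [] \<and> distinct xs \<and> set xs \<subseteq> V
     \<and> (\<forall>i. Suc i < length xs \<longrightarrow> E (xs ! i) (xs ! Suc i))"

lemma length_path_le_card: "finite V \<Longrightarrow> is_path V E xs \<Longrightarrow> length xs \<le> card V"
  unfolding is_path_def by (metis card_mono distinct_card)

lemma is_path_Cons:
  assumes "is_path V E xs" "y \<in> V" "y \<notin> set xs" "E y (hd xs)"
  shows "is_path V E (y # xs)"
  using assms unfolding is_path_def by (auto simp: nth_Cons hd_conv_nth split: nat.split)

lemma has_cycle_if_path_chord:
  assumes p: "is_path V E xs" and j: "2 \<le> j" "j < length xs" and chord: "E (xs ! j) (hd xs)"
  shows "has_cycle V E"
  unfolding has_cycle_def
proof (intro exI conjI allI impI)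
  let ?c = "take (Suc j) xs"
  show "3 \<le> length ?c" "distinct ?c" "set ?c \<subseteq> V"
    using p j by (auto simp: is_path_def dest: in_set_takeD)
  show "E (?c ! i) (?c ! Suc i)" if "Suc i < length ?c" for i
    using p that by (simp add: is_path_def)
  show "E (last ?c) (hd ?c)"
    using p j chord by (simp add: is_path_def take_Suc_conv_app_nth hd_conv_nth nth_append)
qed

lemma forest_has_leaf:
  assumes F: "forest V E" and ne: "V \<noteq> {}"
  shows "\<exists>u\<in>V. \<forall>w w'. E u w \<longrightarrow> E u w' \<longrightarrow> w = w'"
proof -
  have fin: "finite V" and sym: "\<And>x y. E x y \<Longrightarrow> E y x" and irrefl: "\<And>x. \<not> E x x"
    and inV: "\<And>x y. E x y \<Longrightarrow> y \<in> V" and acyclic: "\<not> has_cycle V E"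
    using F by (auto simp: forest_def simple_graph_def)
  obtain a where "a \<in> V" using ne by blast
  then have "is_path V E [a]" by (simp add: is_path_def)
  then have "\<exists>xs. is_path V E xs \<and> (\<forall>ys. is_path V E ys \<longrightarrow> length ys \<le> length xs)"
    by (rule ex_has_greatest_nat[where b="Suc (card V)"])
      (auto dest: length_path_le_card[OF fin] simp: less_Suc_eq_le)
  then obtain xs where xs: "is_path V E xs"
    and longest: "\<And>ys. is_path V E ys \<Longrightarrow> length ys \<le> length xs"
    by blast
  have "y = xs ! 1" if y: "E (hd xs) y" for y
  proof -
    have "y \<in> set xs"
    proof (rule ccontr)
      assume "y \<notin> set xs"
      then have "is_path V E (y # xs)" by (rule is_path_Cons[OF xs inV[OF y] _ sym[OF y]])
      then show False using longest by fastforce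
    qed
    then obtain j where j: "j < length xs" "y = xs ! j" by (metis in_set_conv_nth)
    have "j \<noteq> 0" using xs y j irrefl by (metis hd_conv_nth is_path_def)
    moreover have "\<not> 2 \<le> j"
      using has_cycle_if_path_chord[OF xs _ j(1)] sym[OF y] j(2) acyclic by blast
    ultimately have "j = 1" by simp
    then show ?thesis using j by simp
  qed
  moreover have "hd xs \<in> V" using xs by (auto simp: is_path_def)
  ultimately show ?thesis by blast
qed

lemma leaf_max_indep_set_meets_closed_nbhd_once:
  assumes G: "simple_graph V E" and S: "S \<in> max_indep_sets V E" and u: "u \<in> V"
    and leaf: "\<And>w w'. E u w \<Longrightarrow> E u w' \<Longrightarrow> w = w'"
  shows "\<exists>x\<in>closed_nbhd E u. S \<inter> closed_nbhd E u = {x}"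
proof -
  have "x = y" if "x \<in> S \<inter> closed_nbhd E u" "y \<in> S \<inter> closed_nbhd E u" for x y
    using that S leaf by (auto simp: closed_nbhd_def max_indep_sets_def indep_set_def)
  then show ?thesis using max_indep_set_meets_closed_nbhd[OF G S u] by blast
qed

lemma mult_pow_half_diff_le_pow_half:
  assumes "c \<in> {1, 2}" "c \<le> n"
  shows "c * 2 ^ ((n - c) div 2) \<le> (2::nat) ^ (n div 2)"
proof (cases "c = 1")
  case True
  then show ?thesis by (simp add: div_le_mono)
next
  case False
  with assms have "c = 2" "n div 2 = Suc ((n - 2) div 2)" by (auto simp: div_if)
  then show ?thesis by simp
qed

lemma xi_forest_le_pow_half_card: "forest V E \<Longrightarrow> xi V E \<le> 2 ^ (card V div 2)"
proof (induction "card V" arbitrary: V E rule: less_induct)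
  case less
  have G: "simple_graph V E" using less.prems by (simp add: forest_def)
  have fin: "finite V" using G by (simp add: simple_graph_def)
  show ?case
  proof (cases "V = {}")
    case True
    then have "max_indep_sets V E \<subseteq> {{}}" by (auto simp: max_indep_sets_def indep_set_def)
    then have "xi V E \<le> card {{}::'a set}"
      unfolding xi_eq_card_max_indep_sets by (intro card_mono) auto
    then show ?thesis using True by simp
  next
    case False
    then obtain u where u: "u \<in> V" and leaf: "\<And>w w'. E u w \<Longrightarrow> E u w' \<Longrightarrow> w = w'"
      using forest_has_leaf[OF less.prems] by blast
    let ?N = "closed_nbhd E u"
    have N_sub: "?N \<subseteq> V" using G u by (auto simp: closed_nbhd_def simple_graph_def)
    have N_card: "card ?N \<in> {1, 2}"
    proof (cases "\<exists>w. E u w")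
      case True
      then obtain w where w: "E u w" by blast
      then have "?N = {u, w}" "u \<noteq> w"
        using leaf G by (auto simp: closed_nbhd_def simple_graph_def)
      then show ?thesis by simp
    qed (simp add: closed_nbhd_def)
    have N_fin: "finite ?N" using N_sub fin by (rule finite_subset)
    have card_diff: "card (V - ?N) = card V - card ?N"
      using N_fin N_sub by (rule card_Diff_subset)
    have "card ?N \<le> card V" using fin N_sub by (rule card_mono)
    then have card_less: "card (V - ?N) < card V" using N_card card_diff by auto
    have "xi V E \<le> card ?N * xi (V - ?N) (edges_outside E ?N)"
      unfolding xi_eq_card_max_indep_sets[of V]
      by (rule card_le_card_mult_xi_del[OF fin subset_refl N_fin
            leaf_max_indep_set_meets_closed_nbhd_once[OF G _ u leaf] alpha_del_closed_nbhd_less[OF G u]])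
    also have "\<dots> \<le> card ?N * 2 ^ ((card V - card ?N) div 2)"
      using less.hyps[OF card_less forest_edges_outside[OF less.prems]] card_diff by simp
    also have "\<dots> \<le> 2 ^ (card V div 2)"
      using N_card \<open>card ?N \<le> card V\<close> by (rule mult_pow_half_diff_le_pow_half)
    finally show ?thesis .
  qed
qed

lemma xi_forest_le_mult_xi_del_vertex:
  assumes F: "forest V E" and v: "v \<in> V"
  shows "xi V E \<le> (2 ^ ((card V - 2) div 2) + 1) * xi (V - {v}) (edges_outside E {v})"
proof -
  have G: "simple_graph V E" using F by (simp add: forest_def)
  have fin: "finite V" using G by (simp add: simple_graph_def)
  let ?k = "(card V - 2) div 2" and ?N = "closed_nbhd E v"
  let ?a = "xi (V - {v}) (edges_outside E {v})" and ?b = "xi (V - ?N) (edges_outside E ?N)"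
  have a_pos: "1 \<le> ?a" using xi_pos[of "V - {v}" "edges_outside E {v}"] fin by simp
  have "?b \<le> 2 ^ ?k * ?a"
  proof (cases "\<exists>w. E v w")
    case True
    then obtain w where w: "E v w" by blast
    have N_sub: "{v, w} \<subseteq> ?N" "?N \<subseteq> V" and "v \<noteq> w"
      using G v w by (auto simp: closed_nbhd_def simple_graph_def)
    have N_fin: "finite ?N" using fin N_sub(2) by (rule finite_subset[rotated])
    have "2 = card {v, w}" using \<open>v \<noteq> w\<close> by simp
    also have "\<dots> \<le> card ?N" using N_fin N_sub(1) by (rule card_mono)
    finally have "card (V - ?N) \<le> card V - 2"
      using N_fin N_sub(2) by (simp add: card_Diff_subset)
    then have "2 ^ (card (V - ?N) div 2) \<le> (2::nat) ^ ?k"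
      by (intro power_increasing div_le_mono) simp_all
    then have "?b \<le> 2 ^ ?k"
      using xi_forest_le_pow_half_card[OF forest_edges_outside[OF F]] by (rule order_trans[rotated])
    moreover have "2 ^ ?k * 1 \<le> 2 ^ ?k * ?a" using a_pos by (rule mult_le_mono2)
    ultimately show ?thesis by linarith
  next
    case False
    then have "?N = {v}" by (simp add: closed_nbhd_def)
    then show ?thesis by simp
  qed
  then show ?thesis
    using xi_le_xi_del_vertex_plus_xi_del_closed_nbhd[OF G v] by simp
qed

theorem lemma3:
  fixes V :: "'a set" and E :: "'a \<Rightarrow> 'a \<Rightarrow> bool" and v :: 'a
  assumes "forest V E" and "card V \<ge> 2" and "v \<in> V"
  shows "real (xi V E) / real (xi (fst (del_vertex V E v)) (snd (del_vertex V E v)))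
           \<le> (if odd (card V) then 2 ^ ((card V - 3) div 2) + 1
              else 2 ^ ((card V - 2) div 2) + 1)"
proof -
  let ?k = "(card V - 2) div 2" and ?a = "xi (V - {v}) (edges_outside E {v})"
  have "finite V" using assms(1) by (simp add: forest_def simple_graph_def)
  then have a_pos: "0 < real ?a" using xi_pos[of "V - {v}" "edges_outside E {v}"] by simp
  have "xi V E \<le> (2 ^ ?k + 1) * ?a"
    using assms(1,3) by (rule xi_forest_le_mult_xi_del_vertex)
  then have "real (xi V E) \<le> real ((2 ^ ?k + 1) * ?a)" by (rule of_nat_mono)
  also have "\<dots> = (2 ^ ?k + 1) * real ?a" by (simp add: algebra_simps)
  finally have "real (xi V E) / real ?a \<le> 2 ^ ?k + 1"
    using a_pos by (simp add: pos_divide_le_eq)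
  moreover have "odd (card V) \<Longrightarrow> (card V - 3) div 2 = ?k" using assms(2) by presburger
  ultimately show ?thesis by (simp add: del_vertex_eq)
qed

end
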